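(* Let $T(n)$ denote the number of fixed polyiamonds with $n$ cells. For all positive integers $\ell,m$, $T(\ell+m)\ge \frac{1}{3}\,T(\ell)\,T(m)$.
   Context: The triangular lattice is the tiling of the plane by equilateral triangles; its cells come in two orientations. A polyiamond with $n$ cells is a finite set of $n$ cells of the triangular lattice that is edge-connected, i.e. the graph on the cells in which two cells are adjacent when they share an edge is connected. Two polyiamonds are considered the same if one is a translate of the other (no rotations or reflections allowed); $T(n)$ is the number of such translation classes of polyiamonds with $n$ cells. *)

theory Defs
  imports Complex_Main
begin

text \<open>Cells of the triangular lattice: (x, y, False) is an up-pointing triangle,
 (x, y, True) a down-pointing one. Up (x,y) shares its three edges with
 down (x,y), down (x-1,y) and down (x,y-1).\<close>

type_synonym cell = "int \<times> int \<times> bool"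

definition tri_adj :: "cell \<Rightarrow> cell \<Rightarrow> bool" where
  "tri_adj c d \<longleftrightarrow>
     (case c of (x, y, False) \<Rightarrow> d \<in> {(x, y, True), (x - 1, y, True), (x, y - 1, True)}
              | (x, y, True) \<Rightarrow> d \<in> {(x, y, False), (x + 1, y, False), (x, y + 1, False)})"

definition edge_connected :: "cell set \<Rightarrow> bool" where
  "edge_connected P \<longleftrightarrow>
     (\<forall>c\<in>P. \<forall>d\<in>P. (c, d) \<in> ({(a, b). a \<in> P \<and> b \<in> P \<and> tri_adj a b})\<^sup>*)"

definition polyiamond :: "nat \<Rightarrow> cell set \<Rightarrow> bool" where
  "polyiamond n P \<longleftrightarrow> finite P \<and> card P = n \<and> edge_connected P"

definition translate :: "int \<times> int \<Rightarrow> cell set \<Rightarrow> cell set" where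
  "translate v P = (\<lambda>(x, y, t). (x + fst v, y + snd v, t)) ` P"

definition translation_equiv :: "(cell set \<times> cell set) set" where
  "translation_equiv = {(P, Q). \<exists>v. Q = translate v P}"

definition T :: "nat \<Rightarrow> nat" where
  "T n = card ({P. polyiamond n P} // translation_equiv)"

end

theory Submission
  imports Defs "HOL-Library.Product_Lexorder"
begin

text \<open>Order the cells lexicographically by \<open>(x, y, orientation)\<close> and normalise a translation
  class by moving the greatest cell of its members to the origin. That cell is then \<open>(0, 0, False)\<close>
  or \<open>(0, 0, True)\<close>, so \<open>T n = a n + b n\<close> for the numbers \<open>a n\<close>, \<open>b n\<close> of polyiamonds with
  these greatest cells. Glue a polyiamond with greatest cell \<open>(0, 0, False)\<close> (resp. \<open>(0, 0, True)\<close>)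
  to one whose least cell is the adjacent larger cell \<open>(0, 0, True)\<close> (resp. \<open>(0, 1, False)\<close>): the
  translation class of the union still determines both pieces, the first being its \<open>l\<close> smallest
  cells. Reflection through the origin exchanges least and greatest cells, so
  \<open>T (l + m) \<ge> a l * a m + b l * b m\<close>. Finally \<open>b n \<le> 2 * a n\<close>, and
  \<open>(a + b) * (c + d) \<le> 3 * (a * c + b * d)\<close> whenever \<open>b \<le> 2 * a\<close> and \<open>d \<le> 2 * c\<close>.\<close>

abbreviation up0 :: cell where "up0 \<equiv> (0, 0, False)"
abbreviation down0 :: cell where "down0 \<equiv> (0, 0, True)"

lemma tri_adj_up: "tri_adj (x, y, False) d \<longleftrightarrow> d \<in> {(x, y, True), (x - 1, y, True), (x, y - 1, True)}"
  by (simp add: tri_adj_def)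

lemma tri_adj_down: "tri_adj (x, y, True) d \<longleftrightarrow> d \<in> {(x, y, False), (x + 1, y, False), (x, y + 1, False)}"
  by (simp add: tri_adj_def)

lemma tri_adj_sym: "tri_adj a b \<Longrightarrow> tri_adj b a"
  by (cases a; cases b) (auto simp: tri_adj_def split: bool.splits)

lemma tri_adj_coordinates:
  "tri_adj a b \<Longrightarrow> \<bar>fst a - fst b\<bar> \<le> 1 \<and> \<bar>fst (snd a) - fst (snd b)\<bar> \<le> 1"
  by (cases a; cases b) (auto simp: tri_adj_def split: bool.splits)

definition shift :: "int \<times> int \<Rightarrow> cell \<Rightarrow> cell" where
  "shift v = (\<lambda>(x, y, t). (x + fst v, y + snd v, t))"

lemma shift_simp [simp]: "shift v (x, y, t) = (x + fst v, y + snd v, t)"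
  by (simp add: shift_def)

lemma translate_eq_image_shift: "translate v P = shift v ` P"
  by (simp add: translate_def shift_def)

lemma shift_zero [simp]: "shift (0, 0) c = c"
  by (cases c) simp

lemma shift_shift [simp]: "shift v (shift w c) = shift (fst v + fst w, snd v + snd w) c"
  by (cases c) simp

lemma inj_shift: "inj (shift v)"
  by (rule injI) (auto simp: shift_def split: prod.splits)

lemma strict_mono_shift: "strict_mono (shift v)"
  by (rule strict_monoI) (auto simp: shift_def split: prod.splits)

lemma tri_adj_shift [simp]: "tri_adj (shift v a) (shift v b) \<longleftrightarrow> tri_adj a b"
  by (cases a; cases b) (auto simp: tri_adj_def split: bool.splits)

lemma Max_image_shift: "finite P \<Longrightarrow> P \<noteq> {} \<Longrightarrow> Max (shift v ` P) = shift v (Max P)"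
  by (simp add: mono_Max_commute strict_mono_mono[OF strict_mono_shift])

definition reflect :: "cell \<Rightarrow> cell" where
  "reflect = (\<lambda>(x, y, t). (- x, - y, \<not> t))"

lemma reflect_simp [simp]: "reflect (x, y, t) = (- x, - y, \<not> t)"
  by (simp add: reflect_def)

lemma reflect_reflect [simp]: "reflect (reflect c) = c"
  by (cases c) simp

lemma inj_reflect: "inj reflect"
  by (metis injI reflect_reflect)

lemma reflect_le_reflect_iff [simp]: "reflect a \<le> reflect b \<longleftrightarrow> b \<le> a"
  by (cases a; cases b) auto

lemma tri_adj_reflect [simp]: "tri_adj (reflect a) (reflect b) \<longleftrightarrow> tri_adj a b"
  by (cases a; cases b) (auto simp: tri_adj_def split: bool.splits)

lemma Min_image_reflect:
  assumes "finite P" "P \<noteq> {}"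
  shows "Min (reflect ` P) = reflect (Max P)"
  by (rule Min_eqI) (use assms in \<open>auto simp del: reflect_simp\<close>)

definition adj_rel :: "cell set \<Rightarrow> (cell \<times> cell) set" where
  "adj_rel P = {(a, b). a \<in> P \<and> b \<in> P \<and> tri_adj a b}"

lemma edge_connected_iff: "edge_connected P \<longleftrightarrow> (\<forall>c\<in>P. \<forall>d\<in>P. (c, d) \<in> (adj_rel P)\<^sup>*)"
  by (simp add: edge_connected_def adj_rel_def)

lemma sym_adj_rel: "sym (adj_rel P)"
  by (auto simp: adj_rel_def sym_def intro: tri_adj_sym)

lemma adj_rel_rtrancl_sym: "(a, b) \<in> (adj_rel P)\<^sup>* \<Longrightarrow> (b, a) \<in> (adj_rel P)\<^sup>*"
  by (rule symD[OF sym_rtrancl[OF sym_adj_rel]])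

lemma edge_connected_singleton: "edge_connected {c}"
  by (simp add: edge_connected_iff)

lemma edge_connected_image:
  assumes "edge_connected P" and "\<And>a b. tri_adj a b \<Longrightarrow> tri_adj (f a) (f b)"
  shows "edge_connected (f ` P)"
proof -
  have "(f a, f b) \<in> (adj_rel (f ` P))\<^sup>*" if "(a, b) \<in> (adj_rel P)\<^sup>*" for a b
    using that
  proof (induction rule: rtrancl_induct)
    case (step b c)
    then have "(f b, f c) \<in> adj_rel (f ` P)"
      using assms(2) by (auto simp: adj_rel_def)
    with step.IH show ?case by simp
  qed simp
  with assms(1) show ?thesis
    by (auto simp: edge_connected_iff)
qed

lemma polyiamond_image:
  assumes "polyiamond n P" "inj f" "\<And>a b. tri_adj a b \<Longrightarrow> tri_adj (f a) (f b)"
  shows "polyiamond n (f ` P)"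
  using assms edge_connected_image[of P f] by (auto simp: polyiamond_def card_image inj_on_subset)

lemma polyiamond_shift: "polyiamond n P \<Longrightarrow> polyiamond n (shift v ` P)"
  by (rule polyiamond_image) (auto simp: inj_shift)

lemma polyiamond_reflect: "polyiamond n P \<Longrightarrow> polyiamond n (reflect ` P)"
  by (rule polyiamond_image) (auto simp: inj_reflect)

lemma edge_connected_Un:
  assumes "edge_connected P" "edge_connected Q" "p \<in> P" "q \<in> Q" "tri_adj p q"
  shows "edge_connected (P \<union> Q)"
proof -
  let ?R = "(adj_rel (P \<union> Q))\<^sup>*"
  have P: "(adj_rel P)\<^sup>* \<subseteq> ?R" and Q: "(adj_rel Q)\<^sup>* \<subseteq> ?R"
    by (auto intro!: rtrancl_mono simp: adj_rel_def)
  have pq: "(p, q) \<in> ?R"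
    using assms(3-5) by (auto simp: adj_rel_def)
  have from_p: "(p, c) \<in> ?R" if "c \<in> P \<union> Q" for c
  proof (cases "c \<in> P")
    case True
    then show ?thesis
      using assms(1,3) P by (auto simp: edge_connected_iff)
  next
    case False
    then have "(q, c) \<in> ?R"
      using that assms(2,4) Q by (auto simp: edge_connected_iff)
    with pq show ?thesis
      by (rule rtrancl_trans)
  qed
  show ?thesis
    unfolding edge_connected_iff
    by (meson from_p adj_rel_rtrancl_sym rtrancl_trans)
qed

lemma polyiamond_insert:
  assumes "polyiamond k P" "e \<in> P" "tri_adj e c" "c \<notin> P"
  shows "polyiamond (Suc k) (insert c P)"
proof -
  have "edge_connected (P \<union> {c})"
    using assms(1-3) by (intro edge_connected_Un edge_connected_singleton) (auto simp: polyiamond_def)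
  with assms show ?thesis
    by (simp add: polyiamond_def)
qed

lemma edge_connected_Diff_leaf:
  assumes "edge_connected P" "u \<in> P" "u \<noteq> c" "\<And>d. d \<in> P \<Longrightarrow> tri_adj c d \<Longrightarrow> d = u"
  shows "edge_connected (P - {c})"
proof -
  have reroute: "(a, if b = c then u else b) \<in> (adj_rel (P - {c}))\<^sup>*"
    if "(a, b) \<in> (adj_rel P)\<^sup>*" "a \<noteq> c" for a b
    using that(1)
  proof (induction rule: rtrancl_induct)
    case (step b e)
    have b: "b \<in> P" and e: "e \<in> P" and be: "tri_adj b e"
      using step.hyps(2) by (auto simp: adj_rel_def)
    show ?case
    proof (cases "e = c")
      case True
      then have "b = u"
        using assms(4)[OF b] tri_adj_sym[OF be] by simp
      with True step.IH assms(3) show ?thesis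
        by simp
    next
      case e_ne: False
      show ?thesis
      proof (cases "b = c")
        case True
        then have "e = u"
          using assms(4)[OF e] be by simp
        with True step.IH assms(3) show ?thesis
          by simp
      next
        case False
        then have "(b, e) \<in> adj_rel (P - {c})"
          using b e be e_ne by (simp add: adj_rel_def)
        with False e_ne step.IH show ?thesis
          by (simp add: rtrancl.rtrancl_into_rtrancl)
      qed
    qed
  qed (use that(2) in simp)
  show ?thesis
    unfolding edge_connected_iff
  proof (intro ballI)
    fix a b
    assume "a \<in> P - {c}" "b \<in> P - {c}"
    with assms(1) reroute[of a b] show "(a, b) \<in> (adj_rel (P - {c}))\<^sup>*"
      by (simp add: edge_connected_iff)
  qed
qed

lemma edge_connected_neighbour:
  assumes "edge_connected P" "c \<in> P" "d \<in> P" "c \<noteq> d"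
  obtains e where "e \<in> P" "tri_adj c e"
proof -
  have "(c, d) \<in> (adj_rel P)\<^sup>*"
    using assms(1-3) unfolding edge_connected_iff by blast
  then show ?thesis
  proof (cases rule: converse_rtranclE)
    case (step e)
    then show ?thesis
      using that unfolding adj_rel_def by blast
  qed (use assms(4) in simp)
qed

lemma adj_rel_rtrancl_interval:
  fixes g :: "cell \<Rightarrow> int"
  assumes "(c, d) \<in> (adj_rel P)\<^sup>*" "c \<in> P" "\<And>a b. tri_adj a b \<Longrightarrow> \<bar>g a - g b\<bar> \<le> 1"
  shows "{min (g c) (g d) .. max (g c) (g d)} \<subseteq> g ` P"
  using assms(1)
proof (induction rule: rtrancl_induct)
  case (step b e)
  have "e \<in> P" and "\<bar>g b - g e\<bar> \<le> 1"
    using step.hyps(2) assms(3) by (auto simp: adj_rel_def)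
  then have "{min (g c) (g e) .. max (g c) (g e)} \<subseteq> {min (g c) (g b) .. max (g c) (g b)} \<union> {g e}"
    by auto
  with step.IH \<open>e \<in> P\<close> show ?case
    by blast
qed (use assms(2) in auto)

lemma polyiamond_extent:
  fixes g :: "cell \<Rightarrow> int"
  assumes "polyiamond n P" "c \<in> P" "d \<in> P" "\<And>a b. tri_adj a b \<Longrightarrow> \<bar>g a - g b\<bar> \<le> 1"
  shows "\<bar>g d - g c\<bar> < int n"
proof -
  have "finite P" "card P = n" "(c, d) \<in> (adj_rel P)\<^sup>*"
    using assms(1-3) by (auto simp: polyiamond_def edge_connected_iff)
  moreover have "{min (g c) (g d) .. max (g c) (g d)} \<subseteq> g ` P"
    using adj_rel_rtrancl_interval assms(2,4) \<open>(c, d) \<in> (adj_rel P)\<^sup>*\<close> by blast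
  ultimately have "card {min (g c) (g d) .. max (g c) (g d)} \<le> card (g ` P)"
    by (intro card_mono) auto
  also have "\<dots> \<le> n"
    using \<open>finite P\<close> \<open>card P = n\<close> card_image_le by blast
  finally have "card {min (g c) (g d) .. max (g c) (g d)} \<le> n" .
  then show ?thesis
    by auto
qed

text \<open>Both sets depend on the unspecified values \<open>Max {}\<close> and \<open>Min {}\<close> for \<open>n = 0\<close>, whence the
  hypotheses \<open>0 < n\<close> below.\<close>
definition Max_polyiamonds :: "nat \<Rightarrow> cell \<Rightarrow> cell set set" where
  "Max_polyiamonds n c = {P. polyiamond n P \<and> Max P = c}"

definition Min_polyiamonds :: "nat \<Rightarrow> cell \<Rightarrow> cell set set" where
  "Min_polyiamonds n c = {P. polyiamond n P \<and> Min P = c}"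

lemma polyiamond_nonempty: "polyiamond n P \<Longrightarrow> 0 < n \<Longrightarrow> P \<noteq> {}"
  by (auto simp: polyiamond_def)

lemma finite_Max_polyiamonds: "finite (Max_polyiamonds n c)"
proof -
  let ?box = "{fst c - int n .. fst c + int n} \<times> {fst (snd c) - int n .. fst (snd c) + int n} \<times> (UNIV :: bool set)"
  have "P \<subseteq> ?box" if "P \<in> Max_polyiamonds n c" for P
  proof (cases "P = {}")
    case False
    have P: "polyiamond n P" "Max P = c"
      using that by (auto simp: Max_polyiamonds_def)
    then have "c \<in> P"
      using False Max_in[of P] by (simp add: polyiamond_def)
    show ?thesis
    proof
      fix d
      assume "d \<in> P"
      have "\<bar>fst d - fst c\<bar> < int n"
        by (rule polyiamond_extent[OF P(1) \<open>c \<in> P\<close> \<open>d \<in> P\<close>]) (simp add: tri_adj_coordinates)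
      moreover have "\<bar>fst (snd d) - fst (snd c)\<bar> < int n"
        by (rule polyiamond_extent[OF P(1) \<open>c \<in> P\<close> \<open>d \<in> P\<close>]) (simp add: tri_adj_coordinates)
      ultimately show "d \<in> ?box"
        by (cases d) auto
    qed
  qed simp
  then have "Max_polyiamonds n c \<subseteq> Pow ?box"
    by blast
  then show ?thesis
    by (rule finite_subset) simp
qed

definition anchored_polyiamonds :: "nat \<Rightarrow> cell set set" where
  "anchored_polyiamonds n = Max_polyiamonds n up0 \<union> Max_polyiamonds n down0"

lemma translation_equiv_iff: "(P, Q) \<in> translation_equiv \<longleftrightarrow> (\<exists>v. Q = shift v ` P)"
  by (simp add: translation_equiv_def translate_eq_image_shift)

lemma equiv_translation_equiv: "equiv UNIV translation_equiv"
proof (rule equivI)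
  show "refl_on UNIV translation_equiv"
  proof (rule refl_onI)
    fix P :: "cell set"
    have "P = shift (0, 0) ` P"
      by simp
    then show "(P, P) \<in> translation_equiv"
      unfolding translation_equiv_iff by blast
  qed
  show "sym translation_equiv"
  proof (rule symI)
    fix P Q
    assume "(P, Q) \<in> translation_equiv"
    then obtain v where "Q = shift v ` P"
      by (auto simp: translation_equiv_iff)
    then have "P = shift (- fst v, - snd v) ` Q"
      by (simp add: image_image)
    then show "(Q, P) \<in> translation_equiv"
      by (auto simp: translation_equiv_iff)
  qed
  show "trans translation_equiv"
  proof (rule transI)
    fix P Q R
    assume "(P, Q) \<in> translation_equiv" "(Q, R) \<in> translation_equiv"
    then obtain v w where "Q = shift v ` P" "R = shift w ` Q"
      by (auto simp: translation_equiv_iff)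
    then have "R = shift (fst w + fst v, snd w + snd v) ` P"
      by (simp add: image_image)
    then show "(P, R) \<in> translation_equiv"
      unfolding translation_equiv_iff by blast
  qed
qed simp

lemma shift_eq_zero_if_anchored:
  assumes "0 < n" "P \<in> anchored_polyiamonds n" "shift v ` P \<in> anchored_polyiamonds n"
  shows "v = (0, 0)"
proof -
  obtain t where "Max P = (0, 0, t)" and P: "polyiamond n P"
    using assms(2) by (auto simp: anchored_polyiamonds_def Max_polyiamonds_def)
  then have "Max (shift v ` P) = (fst v, snd v, t)"
    using polyiamond_nonempty[OF P assms(1)] P by (simp add: Max_image_shift polyiamond_def)
  with assms(3) show ?thesis
    by (auto simp: anchored_polyiamonds_def Max_polyiamonds_def prod_eq_iff)
qed

lemma bij_betw_anchored_translation_classes: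
  assumes "0 < n"
  shows "bij_betw (\<lambda>P. translation_equiv `` {P}) (anchored_polyiamonds n)
           ({P. polyiamond n P} // translation_equiv)"
  unfolding bij_betw_def
proof
  show "inj_on (\<lambda>P. translation_equiv `` {P}) (anchored_polyiamonds n)"
  proof (rule inj_onI)
    fix P Q
    assume P: "P \<in> anchored_polyiamonds n" and Q: "Q \<in> anchored_polyiamonds n"
      and "translation_equiv `` {P} = translation_equiv `` {Q}"
    then obtain v where v: "Q = shift v ` P"
      using eq_equiv_class_iff[OF equiv_translation_equiv] by (auto simp: translation_equiv_iff)
    with P Q have "v = (0, 0)"
      using shift_eq_zero_if_anchored[OF assms] by blast
    with v show "P = Q"
      by simp
  qed
  show "(\<lambda>P. translation_equiv `` {P}) ` anchored_polyiamonds n = {P. polyiamond n P} // translation_equiv"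
  proof
    show "(\<lambda>P. translation_equiv `` {P}) ` anchored_polyiamonds n \<subseteq> {P. polyiamond n P} // translation_equiv"
      by (auto simp: anchored_polyiamonds_def Max_polyiamonds_def intro: quotientI)
  next
    show "{P. polyiamond n P} // translation_equiv \<subseteq> (\<lambda>P. translation_equiv `` {P}) ` anchored_polyiamonds n"
    proof
      fix X
      assume "X \<in> {P. polyiamond n P} // translation_equiv"
      then obtain P where P: "polyiamond n P" and X: "X = translation_equiv `` {P}"
        by (auto elim: quotientE)
      obtain a b t where top: "Max P = (a, b, t)"
        by (cases "Max P")
      define P' where "P' = shift (- a, - b) ` P"
      have "Max P' = (0, 0, t)"
        using polyiamond_nonempty[OF P assms] P top by (simp add: P'_def Max_image_shift polyiamond_def)
      then have "P' \<in> anchored_polyiamonds n"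
        using polyiamond_shift[OF P] by (cases t) (auto simp: P'_def anchored_polyiamonds_def Max_polyiamonds_def)
      moreover have "X = translation_equiv `` {P'}"
        unfolding X P'_def
        by (rule equiv_class_eq[OF equiv_translation_equiv]) (auto simp: translation_equiv_iff)
      ultimately show "X \<in> (\<lambda>P. translation_equiv `` {P}) ` anchored_polyiamonds n"
        by blast
    qed
  qed
qed

lemma finite_translation_classes:
  "0 < n \<Longrightarrow> finite ({P. polyiamond n P} // translation_equiv)"
  using bij_betw_finite[OF bij_betw_anchored_translation_classes]
  by (simp add: anchored_polyiamonds_def finite_Max_polyiamonds)

lemma T_eq_card_Max_polyiamonds:
  assumes "0 < n"
  shows "T n = card (Max_polyiamonds n up0) + card (Max_polyiamonds n down0)"
proof -
  have "Max_polyiamonds n up0 \<inter> Max_polyiamonds n down0 = {}"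
    by (auto simp: Max_polyiamonds_def)
  then have "card (anchored_polyiamonds n) = card (Max_polyiamonds n up0) + card (Max_polyiamonds n down0)"
    by (simp add: anchored_polyiamonds_def card_Un_disjoint finite_Max_polyiamonds)
  with bij_betw_same_card[OF bij_betw_anchored_translation_classes[OF assms]] show ?thesis
    by (simp add: T_def)
qed

lemma Max_polyiamonds_shift:
  assumes "0 < n"
  shows "Max_polyiamonds n (shift v c) = image (shift v) ` Max_polyiamonds n c"
proof
  show "image (shift v) ` Max_polyiamonds n c \<subseteq> Max_polyiamonds n (shift v c)"
  proof clarify
    fix P
    assume "P \<in> Max_polyiamonds n c"
    then have P: "polyiamond n P" "Max P = c"
      by (auto simp: Max_polyiamonds_def)
    then have "Max (shift v ` P) = shift v c"
      using polyiamond_nonempty[OF P(1) assms] by (simp add: Max_image_shift polyiamond_def)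
    with polyiamond_shift[OF P(1)] show "shift v ` P \<in> Max_polyiamonds n (shift v c)"
      by (simp add: Max_polyiamonds_def)
  qed
  show "Max_polyiamonds n (shift v c) \<subseteq> image (shift v) ` Max_polyiamonds n c"
  proof
    fix Q
    assume "Q \<in> Max_polyiamonds n (shift v c)"
    then have Q: "polyiamond n Q" "Max Q = shift v c"
      by (auto simp: Max_polyiamonds_def)
    define P where "P = shift (- fst v, - snd v) ` Q"
    have "Q = shift v ` P"
      by (simp add: P_def image_image)
    moreover have "Max P = c"
      using Q polyiamond_nonempty[OF Q(1) assms] by (simp add: P_def Max_image_shift polyiamond_def)
    then have "P \<in> Max_polyiamonds n c"
      using polyiamond_shift[OF Q(1)] by (simp add: P_def Max_polyiamonds_def)
    ultimately show "Q \<in> image (shift v) ` Max_polyiamonds n c"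
      by blast
  qed
qed

lemma card_Max_polyiamonds_shift:
  "0 < n \<Longrightarrow> card (Max_polyiamonds n (shift v c)) = card (Max_polyiamonds n c)"
  by (simp add: Max_polyiamonds_shift card_image inj_on_image inj_on_subset[OF inj_shift])

lemma Min_polyiamonds_reflect:
  assumes "0 < n"
  shows "Min_polyiamonds n (reflect c) = image reflect ` Max_polyiamonds n c"
proof
  show "image reflect ` Max_polyiamonds n c \<subseteq> Min_polyiamonds n (reflect c)"
  proof clarify
    fix P
    assume "P \<in> Max_polyiamonds n c"
    then have P: "polyiamond n P" "Max P = c"
      by (auto simp: Max_polyiamonds_def)
    then have "Min (reflect ` P) = reflect c"
      using polyiamond_nonempty[OF P(1) assms] by (simp add: Min_image_reflect polyiamond_def)
    with polyiamond_reflect[OF P(1)] show "reflect ` P \<in> Min_polyiamonds n (reflect c)"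
      by (simp add: Min_polyiamonds_def)
  qed
  show "Min_polyiamonds n (reflect c) \<subseteq> image reflect ` Max_polyiamonds n c"
  proof
    fix Q
    assume "Q \<in> Min_polyiamonds n (reflect c)"
    then have Q: "polyiamond n Q" "Min Q = reflect c"
      by (auto simp: Min_polyiamonds_def)
    define P where "P = reflect ` Q"
    have "Q = reflect ` P"
      by (simp add: P_def image_image)
    moreover have "Min (reflect ` P) = reflect (Max P)"
      using Q polyiamond_nonempty[OF Q(1) assms] by (intro Min_image_reflect) (auto simp: P_def polyiamond_def)
    then have "Max P = c"
      using Q \<open>Q = reflect ` P\<close> by (metis reflect_reflect)
    then have "P \<in> Max_polyiamonds n c"
      using polyiamond_reflect[OF Q(1)] by (simp add: P_def Max_polyiamonds_def)
    ultimately show "Q \<in> image reflect ` Max_polyiamonds n c"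
      by blast
  qed
qed

lemma card_Min_polyiamonds_reflect:
  "0 < n \<Longrightarrow> card (Min_polyiamonds n (reflect c)) = card (Max_polyiamonds n c)"
  by (simp add: Min_polyiamonds_reflect card_image inj_on_image inj_on_subset[OF inj_reflect])

lemma finite_Min_polyiamonds: "0 < n \<Longrightarrow> finite (Min_polyiamonds n c)"
  using Min_polyiamonds_reflect[of n "reflect c"] by (simp add: finite_Max_polyiamonds)

lemma ordered_split_unique:
  fixes A B C D :: "'a::linorder set"
  assumes "A \<union> B = C \<union> D" "\<forall>a\<in>A. \<forall>b\<in>B. a < b" "\<forall>c\<in>C. \<forall>d\<in>D. c < d"
    and "finite A" "finite C" "card A = card C"
  shows "A = C \<and> B = D"
proof -
  have "A \<subseteq> C \<or> C \<subseteq> A"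
  proof (rule ccontr)
    assume "\<not> (A \<subseteq> C \<or> C \<subseteq> A)"
    then obtain a c where "a \<in> A" "a \<notin> C" "c \<in> C" "c \<notin> A"
      by blast
    moreover from this have "a \<in> D" "c \<in> B"
      using assms(1) by blast+
    ultimately have "a < c" "c < a"
      using assms(2,3) by blast+
    then show False
      by simp
  qed
  then have "A = C"
    using assms(4-6) card_subset_eq by metis
  moreover have "A \<inter> B = {}" "C \<inter> D = {}"
    using assms(2,3) by fastforce+
  ultimately show ?thesis
    using assms(1) by blast
qed

lemma translation_class_Un_eq:
  assumes "0 < l"
    and P1: "P1 \<in> anchored_polyiamonds l" "\<forall>a\<in>P1. \<forall>b\<in>Q1. a < b"
    and P2: "P2 \<in> anchored_polyiamonds l" "\<forall>a\<in>P2. \<forall>b\<in>Q2. a < b"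
    and "translation_equiv `` {P1 \<union> Q1} = translation_equiv `` {P2 \<union> Q2}"
  shows "P1 = P2 \<and> Q1 = Q2"
proof -
  obtain v where "P2 \<union> Q2 = shift v ` (P1 \<union> Q1)"
    using assms(6) eq_equiv_class_iff[OF equiv_translation_equiv] by (auto simp: translation_equiv_iff)
  then have v: "shift v ` P1 \<union> shift v ` Q1 = P2 \<union> Q2"
    by (simp add: image_Un)
  have "\<forall>a\<in>shift v ` P1. \<forall>b\<in>shift v ` Q1. a < b"
    using P1(2) strict_mono_shift by (auto simp: strict_mono_less)
  moreover have "finite P1" "finite P2" "card P1 = card P2"
    using P1(1) P2(1) by (auto simp: anchored_polyiamonds_def Max_polyiamonds_def polyiamond_def)
  ultimately have "shift v ` P1 = P2 \<and> shift v ` Q1 = Q2"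
    using ordered_split_unique[OF v _ P2(2)] by (simp add: card_image inj_on_subset[OF inj_shift])
  moreover from this have "v = (0, 0)"
    using shift_eq_zero_if_anchored[OF assms(1) P1(1)] P2(1) by simp
  ultimately show ?thesis
    by simp
qed

lemma polyiamond_Un_Max_Min:
  assumes "polyiamond l P" "polyiamond m Q" "0 < l" "0 < m"
    and "Max P < Min Q" "tri_adj (Max P) (Min Q)"
  shows "polyiamond (l + m) (P \<union> Q)" "\<forall>a\<in>P. \<forall>b\<in>Q. a < b"
proof -
  have P: "finite P" "P \<noteq> {}" "card P = l" "edge_connected P"
    and Q: "finite Q" "Q \<noteq> {}" "card Q = m" "edge_connected Q"
    using assms(1-4) polyiamond_nonempty by (auto simp: polyiamond_def)
  show below: "\<forall>a\<in>P. \<forall>b\<in>Q. a < b"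
    using P(1) Q(1) assms(5) by (meson Max_ge Min_le order.strict_trans1 order.strict_trans2)
  then have "P \<inter> Q = {}"
    by fastforce
  moreover have "edge_connected (P \<union> Q)"
    using P Q assms(6) by (intro edge_connected_Un[where p = "Max P" and q = "Min Q"]) auto
  ultimately show "polyiamond (l + m) (P \<union> Q)"
    using P Q by (simp add: polyiamond_def card_Un_disjoint)
qed

lemma Max_Min_products_le_T:
  assumes "0 < l" "0 < m"
  shows "card (Max_polyiamonds l up0) * card (Min_polyiamonds m down0)
       + card (Max_polyiamonds l down0) * card (Min_polyiamonds m (0, 1, False)) \<le> T (l + m)"
proof -
  let ?G = "Max_polyiamonds l up0 \<times> Min_polyiamonds m down0
          \<union> Max_polyiamonds l down0 \<times> Min_polyiamonds m (0, 1, False)"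
  have glue: "polyiamond (l + m) (P \<union> Q) \<and> P \<in> anchored_polyiamonds l \<and> (\<forall>a\<in>P. \<forall>b\<in>Q. a < b)"
    if "(P, Q) \<in> ?G" for P Q
  proof -
    have "polyiamond l P" "polyiamond m Q" "Max P < Min Q" "tri_adj (Max P) (Min Q)"
      using that by (auto simp: Max_polyiamonds_def Min_polyiamonds_def tri_adj_def)
    moreover have "P \<in> anchored_polyiamonds l"
      using that by (auto simp: anchored_polyiamonds_def)
    ultimately show ?thesis
      using polyiamond_Un_Max_Min assms by blast
  qed
  let ?glue = "\<lambda>(P, Q). translation_equiv `` {P \<union> Q}"
  have "inj_on ?glue ?G"
  proof (rule inj_onI)
    fix x y
    assume "x \<in> ?G" "y \<in> ?G" and eq: "?glue x = ?glue y"
    moreover obtain P1 Q1 P2 Q2 where "x = (P1, Q1)" "y = (P2, Q2)"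
      by (cases x; cases y)
    ultimately show "x = y"
      using glue[of P1 Q1] glue[of P2 Q2] translation_class_Un_eq[OF assms(1), of P1 Q1 P2 Q2]
      by simp
  qed
  moreover have "?glue ` ?G \<subseteq> {P. polyiamond (l + m) P} // translation_equiv"
    using glue by (auto intro: quotientI)
  ultimately have "card ?G \<le> T (l + m)"
    unfolding T_def using card_inj_on_le finite_translation_classes assms by (metis add_pos_pos)
  moreover have "Max_polyiamonds l up0 \<inter> Max_polyiamonds l down0 = {}"
    by (auto simp: Max_polyiamonds_def)
  then have "card ?G = card (Max_polyiamonds l up0) * card (Min_polyiamonds m down0)
       + card (Max_polyiamonds l down0) * card (Min_polyiamonds m (0, 1, False))"
    using assms by (subst card_Un_disjoint)
      (auto simp: card_cartesian_product finite_Max_polyiamonds finite_Min_polyiamonds)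
  ultimately show ?thesis
    by simp
qed

lemma Max_polyiamonds_one: "Max_polyiamonds 1 c = {{c}}"
  by (cases c) (auto simp: Max_polyiamonds_def polyiamond_def edge_connected_singleton card_1_singleton_iff)

lemma Max_polyiamonds_down0_Diff:
  assumes "P \<in> Max_polyiamonds n down0" "2 \<le> n"
  shows "polyiamond (n - 1) (P - {down0})" "Max (P - {down0}) = up0" "down0 \<in> P" "up0 \<in> P"
proof -
  have P: "finite P" "card P = n" "edge_connected P" "Max P = down0"
    using assms(1) by (auto simp: Max_polyiamonds_def polyiamond_def)
  then have "P \<noteq> {}"
    using assms(2) by auto
  then show "down0 \<in> P"
    using Max_in[OF P(1)] P(4) by simp
  have below: "d \<le> down0" if "d \<in> P" for d
    using Max_ge[OF P(1) that] P(4) by simp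
  have only_up0: "d = up0" if "d \<in> P" "tri_adj down0 d" for d
    using that(2) below[OF that(1)] by (auto simp: tri_adj_down)
  have "P \<noteq> {down0}"
    using P(2) assms(2) by auto
  then obtain d where "d \<in> P" "down0 \<noteq> d"
    using \<open>down0 \<in> P\<close> by blast
  then obtain e where "e \<in> P" "tri_adj down0 e"
    by (rule edge_connected_neighbour[OF P(3) \<open>down0 \<in> P\<close>])
  then show "up0 \<in> P"
    using only_up0 by blast
  then have "edge_connected (P - {down0})"
    using edge_connected_Diff_leaf[OF P(3)] only_up0 by blast
  then show "polyiamond (n - 1) (P - {down0})"
    using P \<open>down0 \<in> P\<close> by (simp add: polyiamond_def)
  have "d \<le> up0" if "d \<in> P - {down0}" for d
    using below[of d] that by (cases d) auto
  then show "Max (P - {down0}) = up0"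
    using P(1) \<open>up0 \<in> P\<close> by (intro Max_eqI) auto
qed

lemma polyiamond_exchange_down0:
  assumes "P \<in> Max_polyiamonds n down0" "2 \<le> n" "e \<in> P - {down0}" "tri_adj e c" "c \<notin> P"
  shows "polyiamond n (insert c (P - {down0}))" "Max (insert c (P - {down0})) = max c up0"
proof -
  note Diff = Max_polyiamonds_down0_Diff[OF assms(1,2)]
  have "polyiamond (Suc (n - 1)) (insert c (P - {down0}))"
    using Diff(1) assms(3-5) by (intro polyiamond_insert) auto
  then show "polyiamond n (insert c (P - {down0}))"
    using assms(2) by simp
  have "finite (P - {down0})" "P - {down0} \<noteq> {}"
    using Diff(1) assms(3) by (auto simp: polyiamond_def)
  then show "Max (insert c (P - {down0})) = max c up0"
    using Diff(2) by (simp add: Max_insert)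
qed

lemma inj_on_insert_Diff: "c \<noteq> d \<Longrightarrow> inj_on (\<lambda>P. insert c (P - {d})) {P. d \<in> P \<and> c \<notin> P}"
  by (rule inj_on_inverseI[where g = "\<lambda>Q. insert d (Q - {c})"]) auto

text \<open>The injections behind the next two bounds exchange the greatest cell \<open>(0, 0, True)\<close> for
  \<open>(0, -1, True)\<close> when that cell is missing, and otherwise for \<open>(1, -1, False)\<close>, which then becomes
  the greatest cell and is translated to the origin.\<close>
lemma card_Max_polyiamonds_down0_without_le:
  assumes "2 \<le> n"
  shows "card {P \<in> Max_polyiamonds n down0. (0, -1, True) \<notin> P} \<le> card (Max_polyiamonds n up0)"
proof (rule card_inj_on_le[OF _ _ finite_Max_polyiamonds])
  let ?f = "\<lambda>P. insert (0, -1, True) (P - {down0})"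
  show "inj_on ?f {P \<in> Max_polyiamonds n down0. (0, -1, True) \<notin> P}"
    using Max_polyiamonds_down0_Diff(3)[OF _ assms] by (intro inj_on_subset[OF inj_on_insert_Diff]) auto
  show "?f ` {P \<in> Max_polyiamonds n down0. (0, -1, True) \<notin> P} \<subseteq> Max_polyiamonds n up0"
  proof clarify
    fix P
    assume P: "P \<in> Max_polyiamonds n down0" "(0, -1, True) \<notin> P"
    then have "up0 \<in> P - {down0}"
      using Max_polyiamonds_down0_Diff(4)[OF _ assms] by simp
    from polyiamond_exchange_down0[OF P(1) assms this _ P(2)]
    show "?f P \<in> Max_polyiamonds n up0"
      by (simp add: Max_polyiamonds_def tri_adj_up)
  qed
qed

lemma card_Max_polyiamonds_down0_with_le:
  assumes "2 \<le> n"
  shows "card {P \<in> Max_polyiamonds n down0. (0, -1, True) \<in> P} \<le> card (Max_polyiamonds n up0)"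
proof (rule card_inj_on_le[OF _ _ finite_Max_polyiamonds])
  let ?X = "{P \<in> Max_polyiamonds n down0. (0, -1, True) \<in> P}"
  let ?g = "\<lambda>P. insert (1, -1, False) (P - {down0})"
  have top: "down0 \<in> P" "(1, -1, False) \<notin> P" if "P \<in> Max_polyiamonds n down0" for P
  proof -
    show "down0 \<in> P"
      using Max_polyiamonds_down0_Diff(3)[OF that assms] .
    have "finite P" "Max P = down0"
      using that by (auto simp: Max_polyiamonds_def polyiamond_def)
    then show "(1, -1, False) \<notin> P"
      using Max_ge[of P "(1, -1, False)"] by auto
  qed
  have "inj_on ?g ?X"
    using top by (intro inj_on_subset[OF inj_on_insert_Diff]) auto
  moreover have "inj (image (shift (-1, 1)))"
    using inj_on_image[of "shift (-1, 1)" UNIV] inj_shift by simp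
  ultimately have "inj_on (image (shift (-1, 1)) \<circ> ?g) ?X"
    by (intro comp_inj_on) (auto intro: inj_on_subset)
  then show "inj_on (\<lambda>P. shift (-1, 1) ` ?g P) ?X"
    by (simp add: comp_def)
  show "(\<lambda>P. shift (-1, 1) ` ?g P) ` ?X \<subseteq> Max_polyiamonds n up0"
  proof clarify
    fix P
    assume P: "P \<in> Max_polyiamonds n down0" "(0, -1, True) \<in> P"
    note exchange = polyiamond_exchange_down0[OF P(1) assms _ _ top(2)[OF P(1)], where e = "(0, -1, True)"]
    have "polyiamond n (shift (-1, 1) ` ?g P)"
      using exchange(1) P(2) by (intro polyiamond_shift) (simp add: tri_adj_down)
    moreover have "Max (shift (-1, 1) ` ?g P) = shift (-1, 1) (Max (?g P))"
      using exchange(1) P(2) assms by (intro Max_image_shift) (auto simp: tri_adj_down polyiamond_def)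
    moreover have "Max (?g P) = (1, -1, False)"
      using exchange(2) P(2) by (simp add: tri_adj_down)
    ultimately show "shift (-1, 1) ` ?g P \<in> Max_polyiamonds n up0"
      unfolding Max_polyiamonds_def by (simp del: image_insert)
  qed
qed

lemma card_Max_polyiamonds_down0_le:
  assumes "0 < n"
  shows "card (Max_polyiamonds n down0) \<le> 2 * card (Max_polyiamonds n up0)"
proof (cases "n = 1")
  case True
  then show ?thesis
    unfolding True Max_polyiamonds_one by simp
next
  case False
  with assms have n: "2 \<le> n"
    by simp
  let ?B = "Max_polyiamonds n down0"
  have "card ?B = card ({P \<in> ?B. (0, -1, True) \<notin> P} \<union> {P \<in> ?B. (0, -1, True) \<in> P})"
    by (rule arg_cong[where f = card]) blast
  also have "\<dots> = card {P \<in> ?B. (0, -1, True) \<notin> P} + card {P \<in> ?B. (0, -1, True) \<in> P}"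
    by (rule card_Un_disjoint) (auto simp: finite_Max_polyiamonds)
  also have "\<dots> \<le> 2 * card (Max_polyiamonds n up0)"
    using card_Max_polyiamonds_down0_without_le[OF n] card_Max_polyiamonds_down0_with_le[OF n] by simp
  finally show ?thesis .
qed

lemma product_le_three_diagonal:
  fixes a b c d :: real
  assumes "0 \<le> a" "0 \<le> b" "0 \<le> c" "0 \<le> d" "b \<le> 2 * a" "d \<le> 2 * c"
  shows "(a + b) * (c + d) \<le> 3 * (a * c + b * d)"
proof -
  have "3 * (a * c + b * d) - (a + b) * (c + d) = ((2 * a - b) * (2 * c - d) + 3 * (b * d)) / 2"
    by (simp add: algebra_simps)
  moreover have "0 \<le> (2 * a - b) * (2 * c - d) + 3 * (b * d)"
    using assms by simp
  ultimately show ?thesis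
    by simp
qed

theorem proposition2:
  fixes l m :: nat
  assumes "l \<ge> 1" and "m \<ge> 1"
  shows "real (T (l + m)) \<ge> (1 / 3) * real (T l) * real (T m)"
proof -
  have l: "0 < l" and m: "0 < m"
    using assms by simp_all
  define a where "a k = real (card (Max_polyiamonds k up0))" for k
  define b where "b k = real (card (Max_polyiamonds k down0))" for k
  have T: "real (T k) = a k + b k" if "0 < k" for k
    using T_eq_card_Max_polyiamonds[OF that] by (simp add: a_def b_def)
  have "card (Min_polyiamonds m down0) = card (Max_polyiamonds m up0)"
    using card_Min_polyiamonds_reflect[OF m, of up0] by simp
  moreover have "card (Min_polyiamonds m (0, 1, False)) = card (Max_polyiamonds m down0)"
    using card_Min_polyiamonds_reflect[OF m, of "(0, -1, True)"]
      card_Max_polyiamonds_shift[OF m, of "(0, -1)" down0] by simp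
  ultimately have "a l * a m + b l * b m \<le> real (T (l + m))"
    using Max_Min_products_le_T[OF l m] unfolding a_def b_def by (metis of_nat_add of_nat_le_iff of_nat_mult)
  moreover have "b k \<le> 2 * a k" if "0 < k" for k
    using card_Max_polyiamonds_down0_le[OF that] by (simp add: a_def b_def)
  then have "(a l + b l) * (a m + b m) \<le> 3 * (a l * a m + b l * b m)"
    using l m by (intro product_le_three_diagonal) (simp_all add: a_def b_def)
  ultimately show ?thesis
    using T[OF l] T[OF m] by simp
qed

end
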